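(* Let $\Gamma$ be a distance-regular graph with diameter $D\ge3$ and $a_1\ne0$. Let $\sigma_0,\dots,\sigma_D$ be a feasible pseudo cosine sequence, let $\rho_0,\dots,\rho_D$ be a nontrivial pseudo cosine sequence such that $\sigma_0,\dots,\sigma_D$ and $\rho_0,\dots,\rho_D$ form a tight pair, and let $\varepsilon$ be the corresponding auxiliary parameter. Then $\sigma_j-\varepsilon\sigma_{j-1}\ne0$ for $1\le j\le D$ and $$\rho_i=\prod_{j=1}^{i}\frac{\sigma_{j-1}-\varepsilon\sigma_j}{\sigma_j-\varepsilon\sigma_{j-1}}\qquad(0\le i\le D).$$
   Context: $\Gamma$ is a finite connected undirected graph without loops or multiple edges, distance-regular with diameter $D$, intersection numbers $a_i,b_i,c_i$ ($c_0=0$, $b_D=0$), valency $k$, $c_i+a_i+b_i=k$. For $\theta\in\mathbb{R}$ the pseudo cosine sequence for $\theta$ is the sequence of reals $\sigma_0,\dots,\sigma_D$ with $\sigma_0=1$ and $c_i\sigma_{i-1}+a_i\sigma_i+b_i\sigma_{i+1}=\theta\sigma_i$ for $0\le i\le D-1$; nontrivial means $\sigma_1\ne1$. Pseudo cosine sequences $\sigma_i$, $\rho_i$ form a tight pair if $(\sigma_i\rho_i)_{i=0}^D$ is a pseudo cosine sequence. For a tight pair of nontrivial pseudo cosine sequences, an auxiliary parameter is a real $\varepsilon$ with $\sigma_i\rho_i-\sigma_{i-1}\rho_{i-1}=\varepsilon(\sigma_{i-1}\rho_i-\sigma_i\rho_{i-1})$ for $1\le i\le D$. When $a_1\ne0$: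 a nontrivial pseudo cosine sequence is tight if some nontrivial pseudo cosine sequence forms a tight pair with it; a pseudo cosine sequence $\sigma_0,\dots,\sigma_D$ is feasible if it is tight and $\sigma_{i-1}\ne\sigma_{i+1}$ for $1\le i\le D-1$. *)

theory Defs
  imports Complex_Main
begin

definition simple_graph :: "'a set \<Rightarrow> ('a \<Rightarrow> 'a \<Rightarrow> bool) \<Rightarrow> bool" where
  "simple_graph V E \<longleftrightarrow> finite V \<and> V \<noteq> {} \<and>
     (\<forall>x y. E x y \<longrightarrow> x \<in> V \<and> y \<in> V) \<and>
     (\<forall>x y. E x y \<longrightarrow> E y x) \<and> (\<forall>x. \<not> E x x)"

definition connected_graph :: "'a set \<Rightarrow> ('a \<Rightarrow> 'a \<Rightarrow> bool) \<Rightarrow> bool" where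
  "connected_graph V E \<longleftrightarrow> (\<forall>x\<in>V. \<forall>y\<in>V. \<exists>n. (E ^^ n) x y)"

definition gdist :: "('a \<Rightarrow> 'a \<Rightarrow> bool) \<Rightarrow> 'a \<Rightarrow> 'a \<Rightarrow> nat" where
  "gdist E x y = (LEAST n. (E ^^ n) x y)"

definition diameter :: "'a set \<Rightarrow> ('a \<Rightarrow> 'a \<Rightarrow> bool) \<Rightarrow> nat" where
  "diameter V E = Max {gdist E x y | x y. x \<in> V \<and> y \<in> V}"

definition distance_regular ::
  "'a set \<Rightarrow> ('a \<Rightarrow> 'a \<Rightarrow> bool) \<Rightarrow> nat \<Rightarrow> (nat \<Rightarrow> nat) \<Rightarrow> (nat \<Rightarrow> nat) \<Rightarrow> (nat \<Rightarrow> nat) \<Rightarrow> bool" where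
  "distance_regular V E D a b c \<longleftrightarrow>
     simple_graph V E \<and> connected_graph V E \<and> diameter V E = D \<and> c 0 = 0 \<and>
     (\<forall>x\<in>V. \<forall>y\<in>V. let i = gdist E x y in
        (i \<ge> 1 \<longrightarrow> c i = card {z\<in>V. E y z \<and> gdist E x z = i - 1}) \<and>
        a i = card {z\<in>V. E y z \<and> gdist E x z = i} \<and>
        b i = card {z\<in>V. E y z \<and> gdist E x z = i + 1})"

definition pseudo_cosine_for ::
  "nat \<Rightarrow> (nat \<Rightarrow> nat) \<Rightarrow> (nat \<Rightarrow> nat) \<Rightarrow> (nat \<Rightarrow> nat) \<Rightarrow> real \<Rightarrow> (nat \<Rightarrow> real) \<Rightarrow> bool" where
  "pseudo_cosine_for D a b c \<theta> \<sigma> \<longleftrightarrow> \<sigma> 0 = 1 \<and>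
     (\<forall>i<D. (if i = 0 then 0 else real (c i) * \<sigma> (i - 1)) + real (a i) * \<sigma> i
              + real (b i) * \<sigma> (i + 1) = \<theta> * \<sigma> i)"

definition pseudo_cosine ::
  "nat \<Rightarrow> (nat \<Rightarrow> nat) \<Rightarrow> (nat \<Rightarrow> nat) \<Rightarrow> (nat \<Rightarrow> nat) \<Rightarrow> (nat \<Rightarrow> real) \<Rightarrow> bool" where
  "pseudo_cosine D a b c \<sigma> \<longleftrightarrow> (\<exists>\<theta>. pseudo_cosine_for D a b c \<theta> \<sigma>)"

definition nontrivial_pc ::
  "nat \<Rightarrow> (nat \<Rightarrow> nat) \<Rightarrow> (nat \<Rightarrow> nat) \<Rightarrow> (nat \<Rightarrow> nat) \<Rightarrow> (nat \<Rightarrow> real) \<Rightarrow> bool" where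
  "nontrivial_pc D a b c \<sigma> \<longleftrightarrow> pseudo_cosine D a b c \<sigma> \<and> \<sigma> 1 \<noteq> 1"

definition tight_pair ::
  "nat \<Rightarrow> (nat \<Rightarrow> nat) \<Rightarrow> (nat \<Rightarrow> nat) \<Rightarrow> (nat \<Rightarrow> nat) \<Rightarrow> (nat \<Rightarrow> real) \<Rightarrow> (nat \<Rightarrow> real) \<Rightarrow> bool" where
  "tight_pair D a b c \<sigma> \<rho> \<longleftrightarrow> pseudo_cosine D a b c \<sigma> \<and> pseudo_cosine D a b c \<rho> \<and>
     pseudo_cosine D a b c (\<lambda>i. \<sigma> i * \<rho> i)"

definition auxiliary_parameter ::
  "nat \<Rightarrow> (nat \<Rightarrow> real) \<Rightarrow> (nat \<Rightarrow> real) \<Rightarrow> real \<Rightarrow> bool" where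
  "auxiliary_parameter D \<sigma> \<rho> \<epsilon> \<longleftrightarrow>
     (\<forall>i\<in>{1..D}. \<sigma> i * \<rho> i - \<sigma> (i - 1) * \<rho> (i - 1)
                  = \<epsilon> * (\<sigma> (i - 1) * \<rho> i - \<sigma> i * \<rho> (i - 1)))"

definition tight_pc ::
  "nat \<Rightarrow> (nat \<Rightarrow> nat) \<Rightarrow> (nat \<Rightarrow> nat) \<Rightarrow> (nat \<Rightarrow> nat) \<Rightarrow> (nat \<Rightarrow> real) \<Rightarrow> bool" where
  "tight_pc D a b c \<sigma> \<longleftrightarrow> nontrivial_pc D a b c \<sigma> \<and>
     (\<exists>\<rho>. nontrivial_pc D a b c \<rho> \<and> tight_pair D a b c \<sigma> \<rho>)"

definition feasible_pc ::
  "nat \<Rightarrow> (nat \<Rightarrow> nat) \<Rightarrow> (nat \<Rightarrow> nat) \<Rightarrow> (nat \<Rightarrow> nat) \<Rightarrow> (nat \<Rightarrow> real) \<Rightarrow> bool" where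
  "feasible_pc D a b c \<sigma> \<longleftrightarrow> tight_pc D a b c \<sigma> \<and>
     (\<forall>i\<in>{1..D-1}. \<sigma> (i - 1) \<noteq> \<sigma> (i + 1))"

end

theory Submission
  imports Defs
begin

(* Rewritten as rho_i (sigma_i - eps sigma_(i-1)) = rho_(i-1) (sigma_(i-1) - eps sigma_i), the
   auxiliary-parameter identity yields the product formula by a telescoping induction, once
   every factor sigma_j - eps sigma_(j-1) is known to be nonzero.  If one vanished, the
   identity would give rho_(j-1) sigma_(j-1) (1 - eps^2) = 0, and each factor is excluded:
   eps = 1 and eps = -1 contradict the three-term recurrences at i = 1, 2 together with
   a_1 > 0, c_2 > 0 and sigma_1 <> sigma_3; a pseudo cosine sequence never has two
   consecutive zeros because c_i > 0, and sigma_(j-1) = 0 would force sigma_j = 0; and at a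
   zero of rho the recurrences of rho and of sigma rho differ by a multiple of
   sigma_(i-1) - sigma_(i+1), so by feasibility rho would also vanish at the previous index,
   whence rho_(j-1) <> 0. *)

lemma gdist_le: "(E ^^ n) x y \<Longrightarrow> gdist E x y \<le> n"
  unfolding gdist_def by (rule Least_le)

lemma gdist_walk: "(E ^^ n) x y \<Longrightarrow> (E ^^ gdist E x y) x y"
  unfolding gdist_def by (rule LeastI)

lemma gdist_self [simp]: "gdist E x x = 0"
  unfolding gdist_def by (simp add: Least_eq_0)

lemma gdist_step: "(E ^^ n) x y \<Longrightarrow> E y z \<Longrightarrow> gdist E x z \<le> gdist E x y + 1"
  by (metis Suc_eq_plus1 gdist_le gdist_walk relpowp_Suc_I)

locale connected_simple_graph =
  fixes V :: "'v set" and E :: "'v \<Rightarrow> 'v \<Rightarrow> bool"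
  assumes simple: "simple_graph V E" and connected: "connected_graph V E"
begin

lemma finite_V: "finite V" and V_nonempty: "V \<noteq> {}"
  and edge_in_V: "E x y \<Longrightarrow> x \<in> V \<and> y \<in> V"
  and edge_sym: "E x y \<Longrightarrow> E y x" and edge_irrefl: "\<not> E x x"
  using simple unfolding simple_graph_def by auto

lemma walk_gdist: "x \<in> V \<Longrightarrow> y \<in> V \<Longrightarrow> (E ^^ gdist E x y) x y"
  using connected gdist_walk unfolding connected_graph_def by metis

lemma gdist_eq_0_iff: "x \<in> V \<Longrightarrow> y \<in> V \<Longrightarrow> gdist E x y = 0 \<longleftrightarrow> y = x"
  using walk_gdist[of x y] by auto

lemma gdist_edge:
  assumes "E x y"
  shows "gdist E x y = 1"
proof -
  have "gdist E x y \<le> 1"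
    using gdist_le[of 1 E x y] assms unfolding relpowp_1 by simp
  moreover have "gdist E x y \<noteq> 0"
    using gdist_eq_0_iff[of x y] edge_in_V[OF assms] edge_irrefl[of x] assms by auto
  ultimately show ?thesis
    by simp
qed

lemma gdist_neighbour_le: "x \<in> V \<Longrightarrow> E y z \<Longrightarrow> gdist E x z \<le> gdist E x y + 1"
  by (meson edge_in_V gdist_step walk_gdist)

lemma gdist_neighbour_ge: "x \<in> V \<Longrightarrow> E y z \<Longrightarrow> gdist E x y \<le> gdist E x z + 1"
  by (rule gdist_neighbour_le[OF _ edge_sym])

lemma walk_in_V: "x \<in> V \<Longrightarrow> (E ^^ n) x z \<Longrightarrow> z \<in> V"
  by (cases n) (use edge_in_V in auto)

lemma gdist_attained:
  assumes "m \<le> diameter V E"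
  obtains x z where "x \<in> V" "z \<in> V" "gdist E x z = m"
proof -
  have "diameter V E \<in> (\<lambda>(x, y). gdist E x y) ` (V \<times> V)"
  proof -
    have "{gdist E x y | x y. x \<in> V \<and> y \<in> V} = (\<lambda>(x, y). gdist E x y) ` (V \<times> V)"
      by auto
    then show ?thesis
      unfolding diameter_def using finite_V V_nonempty by (simp add: Max_in)
  qed
  then obtain x y where xy: "x \<in> V" "y \<in> V" "gdist E x y = diameter V E"
    by auto
  then have "(E ^^ (m + (diameter V E - m))) x y"
    using walk_gdist[OF xy(1,2)] xy(3) assms by simp
  then obtain z where xz: "(E ^^ m) x z" and zy: "(E ^^ (diameter V E - m)) z y"
    unfolding relpowp_add by auto
  have "z \<in> V"
    using walk_in_V[OF xy(1) xz] .
  have "(E ^^ (gdist E x z + (diameter V E - m))) x y"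
    using gdist_walk[OF xz] zy unfolding relpowp_add by auto
  then have "diameter V E \<le> gdist E x z + (diameter V E - m)"
    using gdist_le xy(3) by metis
  then have "gdist E x z = m"
    using gdist_le[OF xz] assms by linarith
  with that xy(1) \<open>z \<in> V\<close> show thesis
    by blast
qed

lemma exists_closer_neighbour:
  assumes "x \<in> V" "y \<in> V" "gdist E x y = Suc m"
  obtains w where "w \<in> V" "E y w" "gdist E x w = m"
proof -
  have "(E ^^ Suc m) x y"
    using walk_gdist[OF assms(1,2)] assms(3) by simp
  then obtain w where xw: "(E ^^ m) x w" and wy: "E w y"
    by (rule relpowp_Suc_E)
  have "gdist E x w = m"
    using gdist_le[OF xw] gdist_neighbour_le[OF assms(1) wy] assms(3) by linarith
  then show thesis
    using that edge_in_V[OF wy] edge_sym[OF wy] by blast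
qed

abbreviation neighbours_at :: "'v \<Rightarrow> 'v \<Rightarrow> nat \<Rightarrow> 'v set" where
  "neighbours_at x y i \<equiv> {z \<in> V. E y z \<and> gdist E x z = i}"

lemma degree_split:
  assumes "x \<in> V" "gdist E x y = i" "1 \<le> i"
  shows "card {z \<in> V. E y z} =
    card (neighbours_at x y (i - 1)) + card (neighbours_at x y i) + card (neighbours_at x y (i + 1))"
proof -
  have "gdist E x z \<in> {i - 1, i, i + 1}" if "E y z" for z
    using gdist_neighbour_le[OF assms(1) that] gdist_neighbour_ge[OF assms(1) that] assms(2)
    by simp linarith
  then have "{z \<in> V. E y z} = (neighbours_at x y (i - 1) \<union> neighbours_at x y i) \<union> neighbours_at x y (i + 1)"
    by blast
  moreover have "card ((neighbours_at x y (i - 1) \<union> neighbours_at x y i) \<union> neighbours_at x y (i + 1)) =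
      card (neighbours_at x y (i - 1) \<union> neighbours_at x y i) + card (neighbours_at x y (i + 1))"
    by (rule card_Un_disjoint) (use finite_V in auto)
  moreover have "card (neighbours_at x y (i - 1) \<union> neighbours_at x y i) =
      card (neighbours_at x y (i - 1)) + card (neighbours_at x y i)"
    by (rule card_Un_disjoint) (use finite_V assms(3) in auto)
  ultimately show ?thesis
    by simp
qed

end

locale intersection_numbers =
  fixes D :: nat and a b c :: "nat \<Rightarrow> nat"
  assumes a_0: "a 0 = 0"
    and valency: "1 \<le> i \<Longrightarrow> i \<le> D \<Longrightarrow> c i + a i + b i = b 0"
    and c_pos: "1 \<le> i \<Longrightarrow> i \<le> D \<Longrightarrow> 0 < c i"

lemma distance_regular_connected_simple_graph:
  "distance_regular V E D a b c \<Longrightarrow> connected_simple_graph V E"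
  unfolding distance_regular_def by (simp add: connected_simple_graph.intro)

lemma (in connected_simple_graph) distance_regularD:
  assumes "distance_regular V E D a b c" "x \<in> V" "y \<in> V" "gdist E x y = i"
  shows "1 \<le> i \<Longrightarrow> c i = card (neighbours_at x y (i - 1))"
    and "a i = card (neighbours_at x y i)"
    and "b i = card (neighbours_at x y (i + 1))"
  using assms unfolding distance_regular_def Let_def by auto

lemma distance_regular_intersection_numbers:
  assumes DR: "distance_regular V E D a b c"
  shows "intersection_numbers D a b c"
proof -
  interpret connected_simple_graph V E
    using DR by (rule distance_regular_connected_simple_graph)
  have diameter: "diameter V E = D"
    using DR unfolding distance_regular_def by simp
  have no_neighbours_at_0: "neighbours_at y y 0 = {}" for y
    using gdist_edge by auto
  have degree: "card {z \<in> V. E y z} = b 0" if "y \<in> V" for y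
  proof -
    have "neighbours_at y y 1 = {z \<in> V. E y z}"
      using gdist_edge by auto
    then show ?thesis
      using distance_regularD(3)[OF DR that that] by simp
  qed
  show ?thesis
  proof
    obtain v where "v \<in> V"
      using V_nonempty by blast
    then show "a 0 = 0"
      using distance_regularD(2)[OF DR, of v v] no_neighbours_at_0 by simp
  next
    fix i assume i: "1 \<le> i" "i \<le> D"
    then obtain x y where xy: "x \<in> V" "y \<in> V" "gdist E x y = i"
      using gdist_attained[of i] diameter by auto
    show "c i + a i + b i = b 0"
      using degree_split[OF xy(1,3) i(1)] degree[OF xy(2)] distance_regularD[OF DR xy] i(1) by simp
    obtain w where "w \<in> V" "E y w" "gdist E x w = i - 1"
      using exists_closer_neighbour[OF xy(1,2), of "i - 1"] xy(3) i(1) by auto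
    then have "neighbours_at x y (i - 1) \<noteq> {}"
      by blast
    then show "0 < c i"
      using distance_regularD(1)[OF DR xy i(1)] finite_V by (simp add: card_gt_0_iff)
  qed
qed

lemma pseudo_cosine_0: "pseudo_cosine D a b c x \<Longrightarrow> x 0 = 1"
  unfolding pseudo_cosine_def pseudo_cosine_for_def by blast

lemma tight_pair_sym: "tight_pair D a b c \<sigma> \<rho> \<Longrightarrow> tight_pair D a b c \<rho> \<sigma>"
  unfolding tight_pair_def by (simp add: mult.commute)

lemma auxiliary_parameter_iff:
  "auxiliary_parameter D \<sigma> \<rho> \<epsilon> \<longleftrightarrow>
     (\<forall>i\<in>{1..D}. \<rho> i * (\<sigma> i - \<epsilon> * \<sigma> (i - 1)) = \<rho> (i - 1) * (\<sigma> (i - 1) - \<epsilon> * \<sigma> i))"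
  unfolding auxiliary_parameter_def by (rule ball_cong) (auto simp: algebra_simps)

lemma recurrence_eq_prod:
  fixes f p q :: "nat \<Rightarrow> 'a::field"
  assumes "f 0 = 1"
    and "\<And>j. 1 \<le> j \<Longrightarrow> j \<le> n \<Longrightarrow> f j * q j = f (j - 1) * p j"
    and "\<And>j. 1 \<le> j \<Longrightarrow> j \<le> n \<Longrightarrow> q j \<noteq> 0"
  shows "f n = (\<Prod>j=1..n. p j / q j)"
  using assms(2,3)
proof (induction n)
  case 0
  then show ?case using assms(1) by simp
next
  case (Suc n)
  have "f (Suc n) = f n * (p (Suc n) / q (Suc n))"
    using Suc.prems[of "Suc n"] by (simp add: field_simps)
  also have "f n = (\<Prod>j=1..n. p j / q j)"
    using Suc by simp
  finally show ?case
    by (simp add: prod.nat_ivl_Suc' mult.commute)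
qed

context intersection_numbers
begin

lemma pseudo_cosine_rec:
  assumes "pseudo_cosine D a b c x" "1 \<le> i" "i < D"
  shows "real (c i) * x (i - 1) + real (a i) * x i + real (b i) * x (i + 1) = real (b 0) * x 1 * x i"
proof -
  obtain \<theta> where \<theta>: "pseudo_cosine_for D a b c \<theta> x"
    using assms(1) unfolding pseudo_cosine_def by blast
  then have "\<theta> = real (b 0) * x 1"
    using a_0 assms(3) unfolding pseudo_cosine_for_def by force
  then show ?thesis
    using \<theta> assms(2,3) unfolding pseudo_cosine_for_def by auto
qed

lemma pseudo_cosine_no_consecutive_zeros:
  assumes "pseudo_cosine D a b c x" "m < D" "x m = 0"
  shows "x (Suc m) \<noteq> 0"
  using assms(2,3)
proof (induction m)
  case 0
  then show ?case using pseudo_cosine_0[OF assms(1)] by simp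
next
  case (Suc m)
  show ?case
  proof
    assume "x (Suc (Suc m)) = 0"
    then have "real (c (Suc m)) * x m = 0"
      using pseudo_cosine_rec[OF assms(1), of "Suc m"] Suc.prems by simp
    then show False
      using c_pos[of "Suc m"] Suc by simp
  qed
qed

lemma b_0_pos: "1 \<le> D \<Longrightarrow> 0 < b 0"
  using valency[of 1] c_pos[of 1] by linarith

lemma tight_pair_nonzero:
  assumes tight: "tight_pair D a b c \<sigma> \<rho>" and "i < D"
    and feasible: "1 \<le> i \<Longrightarrow> \<sigma> (i - 1) \<noteq> \<sigma> (i + 1)"
  shows "\<rho> i \<noteq> 0"
proof
  assume \<rho>_i: "\<rho> i = 0"
  have \<rho>: "pseudo_cosine D a b c \<rho>" and \<sigma>\<rho>: "pseudo_cosine D a b c (\<lambda>i. \<sigma> i * \<rho> i)"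
    using tight unfolding tight_pair_def by auto
  have "i \<noteq> 0"
    using \<rho>_i pseudo_cosine_0[OF \<rho>] by (metis zero_neq_one)
  then have i: "1 \<le> i" "i < D" "Suc (i - 1) = i"
    using \<open>i < D\<close> by auto
  have "real (c i) * \<rho> (i - 1) + real (b i) * \<rho> (i + 1) = 0"
    using pseudo_cosine_rec[OF \<rho> i(1,2)] \<rho>_i by simp
  moreover have "real (c i) * (\<sigma> (i - 1) * \<rho> (i - 1)) + real (b i) * (\<sigma> (i + 1) * \<rho> (i + 1)) = 0"
    using pseudo_cosine_rec[OF \<sigma>\<rho> i(1,2)] \<rho>_i by simp
  ultimately have "real (c i) * \<rho> (i - 1) * (\<sigma> (i - 1) - \<sigma> (i + 1)) = 0"
    by algebra
  then have "\<rho> (i - 1) = 0"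
    using c_pos[of i] i feasible by simp
  then show False
    using pseudo_cosine_no_consecutive_zeros[OF \<rho>, of "i - 1"] \<rho>_i i by simp
qed

lemma pseudo_cosine_2_if_1_eq_minus_1:
  assumes "pseudo_cosine D a b c x" "2 \<le> D" "x 1 = -1"
  shows "real (b 1) * x 2 = real (b 1) + 2 * real (a 1)"
proof -
  have "real (c 1) - real (a 1) + real (b 1) * x 2 = real (b 0)"
    using pseudo_cosine_rec[OF assms(1), of 1] pseudo_cosine_0[OF assms(1)] assms(2,3)
    by (simp add: numeral_2_eq_2)
  moreover have "real (c 1) + real (a 1) + real (b 1) = real (b 0)"
    using valency[of 1] assms(2) by (simp flip: of_nat_add)
  ultimately show ?thesis by linarith
qed

lemma tight_pair_2_eq_1_if_minus_1:
  assumes tight: "tight_pair D a b c \<sigma> \<rho>" and "2 \<le> D" "a 1 \<noteq> 0" "\<rho> 1 = -1"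
  shows "\<sigma> 2 = \<sigma> 1"
proof -
  have \<sigma>: "pseudo_cosine D a b c \<sigma>" and \<rho>: "pseudo_cosine D a b c \<rho>"
    and \<sigma>\<rho>: "pseudo_cosine D a b c (\<lambda>i. \<sigma> i * \<rho> i)"
    using tight unfolding tight_pair_def by auto
  have "real (c 1) + real (a 1) * \<sigma> 1 + real (b 1) * \<sigma> 2 = real (b 0) * \<sigma> 1 * \<sigma> 1"
    using pseudo_cosine_rec[OF \<sigma>, of 1] pseudo_cosine_0[OF \<sigma>] assms(2)
    by (simp add: numeral_2_eq_2)
  moreover have "real (c 1) - real (a 1) * \<sigma> 1 + real (b 1) * \<sigma> 2 * \<rho> 2 = real (b 0) * \<sigma> 1 * \<sigma> 1"
    using pseudo_cosine_rec[OF \<sigma>\<rho>, of 1] pseudo_cosine_0[OF \<sigma>] pseudo_cosine_0[OF \<rho>] assms(2,4)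
    by (simp add: numeral_2_eq_2)
  moreover have "real (b 1) * \<rho> 2 = real (b 1) + 2 * real (a 1)"
    using pseudo_cosine_2_if_1_eq_minus_1[OF \<rho> assms(2,4)] .
  ultimately have "2 * real (a 1) * (\<sigma> 2 - \<sigma> 1) = 0"
    by algebra
  then show ?thesis
    using assms(3) by simp
qed

lemma pseudo_cosine_3_neq_minus_2:
  assumes "pseudo_cosine D a b c x" "3 \<le> D" "a 1 \<noteq> 0" "x 1 = -1"
  shows "x 3 \<noteq> - x 2"
proof
  assume x_3: "x 3 = - x 2"
  have "- real (c 2) + real (a 2) * x 2 - real (b 2) * x 2 = - real (b 0) * x 2"
    using pseudo_cosine_rec[OF assms(1), of 2] assms(2,4) x_3 by (simp add: numeral_3_eq_3)
  moreover have "real (c 2) + real (a 2) + real (b 2) = real (b 0)"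
    using valency[of 2] assms(2) by (simp flip: of_nat_add)
  moreover have "real (b 1) * x 2 = real (b 1) + 2 * real (a 1)"
    using pseudo_cosine_2_if_1_eq_minus_1[OF assms(1)] assms(2,4) by simp
  ultimately have "real (b 1) * real (c 2) = (2 * real (a 2) + real (c 2)) * (real (b 1) + 2 * real (a 1))"
    by algebra
  then have "2 * real (a 2) * real (b 1) + 4 * real (a 2) * real (a 1) + 2 * real (c 2) * real (a 1) = 0"
    by (simp add: algebra_simps)
  moreover have "0 < real (c 2) * real (a 1)"
    using c_pos[of 2] assms(2,3) by simp
  ultimately show False
    by (auto simp: add_nonneg_eq_0_iff)
qed

lemma pseudo_cosine_const_1_to_3:
  assumes "pseudo_cosine D a b c x" "3 \<le> D" "x 2 = x 1" "x 3 = x 1"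
  shows "x 1 = 1"
proof -
  have "real (c 2) * x 1 + real (a 2) * x 1 + real (b 2) * x 1 = real (b 0) * x 1 * x 1"
    using pseudo_cosine_rec[OF assms(1), of 2] assms(2-4) by (simp add: numeral_3_eq_3)
  moreover have "real (c 2) + real (a 2) + real (b 2) = real (b 0)"
    using valency[of 2] assms(2) by (simp flip: of_nat_add)
  ultimately have "real (b 0) * x 1 * (x 1 - 1) = 0"
    by algebra
  moreover have "x 1 \<noteq> 0"
    using pseudo_cosine_no_consecutive_zeros[OF assms(1), of 1] assms(2,3)
    by (auto simp: numeral_2_eq_2)
  ultimately show ?thesis
    using b_0_pos assms(2) by simp
qed

end

locale feasible_tight_pair = intersection_numbers +
  fixes \<sigma> \<rho> :: "nat \<Rightarrow> real" and \<epsilon> :: real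
  assumes D_ge_3: "3 \<le> D" and a_1: "a 1 \<noteq> 0"
    and \<sigma>_feasible: "feasible_pc D a b c \<sigma>"
    and \<rho>_nontrivial: "nontrivial_pc D a b c \<rho>"
    and tight: "tight_pair D a b c \<sigma> \<rho>"
    and auxiliary: "auxiliary_parameter D \<sigma> \<rho> \<epsilon>"
begin

lemma \<sigma>_1: "\<sigma> 1 \<noteq> 1" and \<rho>_1: "\<rho> 1 \<noteq> 1"
  and \<sigma>_feasible_neq: "1 \<le> i \<Longrightarrow> i < D \<Longrightarrow> \<sigma> (i - 1) \<noteq> \<sigma> (i + 1)"
  using \<sigma>_feasible \<rho>_nontrivial
  unfolding feasible_pc_def tight_pc_def nontrivial_pc_def by auto

lemma pseudo_cosine_\<sigma>: "pseudo_cosine D a b c \<sigma>"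
  and pseudo_cosine_\<rho>: "pseudo_cosine D a b c \<rho>"
  using tight unfolding tight_pair_def by auto

lemma \<sigma>_0: "\<sigma> 0 = 1" and \<rho>_0: "\<rho> 0 = 1"
  using pseudo_cosine_0 pseudo_cosine_\<sigma> pseudo_cosine_\<rho> by auto

lemma auxiliary_parameter_rec:
  assumes "1 \<le> i" "i \<le> D"
  shows "\<rho> i * (\<sigma> i - \<epsilon> * \<sigma> (i - 1)) = \<rho> (i - 1) * (\<sigma> (i - 1) - \<epsilon> * \<sigma> i)"
  using auxiliary assms unfolding auxiliary_parameter_iff by auto

lemma \<epsilon>_neq_1: "\<epsilon> \<noteq> 1"
proof
  assume "\<epsilon> = 1"
  then have "(\<sigma> 1 - 1) * (\<rho> 1 + 1) = 0"
    using auxiliary_parameter_rec[of 1] D_ge_3 \<sigma>_0 \<rho>_0 by (simp add: algebra_simps)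
  then have "\<rho> 1 = -1"
    using \<sigma>_1 by simp
  then have "\<sigma> 2 = \<sigma> 1"
    using tight_pair_2_eq_1_if_minus_1[OF tight] D_ge_3 a_1 by simp
  moreover have "(\<sigma> 3 - \<sigma> 2) * (\<rho> 3 + \<rho> 2) = 0"
    using auxiliary_parameter_rec[of 3] D_ge_3 \<open>\<epsilon> = 1\<close> by (simp add: algebra_simps)
  ultimately have "\<rho> 3 = - \<rho> 2"
    using \<sigma>_feasible_neq[of 2] D_ge_3 by (simp add: numeral_3_eq_3)
  then show False
    using pseudo_cosine_3_neq_minus_2[OF pseudo_cosine_\<rho> D_ge_3 a_1 \<open>\<rho> 1 = -1\<close>] by simp
qed

lemma \<epsilon>_neq_minus_1: "\<epsilon> \<noteq> -1"
proof
  assume "\<epsilon> = -1"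
  then have "(\<sigma> 1 + 1) * (\<rho> 1 - 1) = 0"
    using auxiliary_parameter_rec[of 1] D_ge_3 \<sigma>_0 \<rho>_0 by (simp add: algebra_simps)
  then have "\<sigma> 1 = -1"
    using \<rho>_1 by simp
  then have "\<rho> 2 = \<rho> 1"
    using tight_pair_2_eq_1_if_minus_1[OF tight_pair_sym[OF tight]] D_ge_3 a_1 by simp
  moreover have "(\<sigma> 3 + \<sigma> 2) * (\<rho> 3 - \<rho> 2) = 0"
    using auxiliary_parameter_rec[of 3] D_ge_3 \<open>\<epsilon> = -1\<close> by (simp add: algebra_simps)
  moreover have "\<sigma> 3 \<noteq> - \<sigma> 2"
    using pseudo_cosine_3_neq_minus_2[OF pseudo_cosine_\<sigma> D_ge_3 a_1 \<open>\<sigma> 1 = -1\<close>] .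
  ultimately have "\<rho> 3 = \<rho> 1"
    by simp
  then show False
    using pseudo_cosine_const_1_to_3[OF pseudo_cosine_\<rho> D_ge_3] \<open>\<rho> 2 = \<rho> 1\<close> \<rho>_1 by simp
qed

lemma denominator_nonzero:
  assumes "1 \<le> j" "j \<le> D"
  shows "\<sigma> j - \<epsilon> * \<sigma> (j - 1) \<noteq> 0"
proof
  assume \<sigma>_j: "\<sigma> j - \<epsilon> * \<sigma> (j - 1) = 0"
  then have "\<rho> (j - 1) * \<sigma> (j - 1) * (1 - \<epsilon>) * (1 + \<epsilon>) = 0"
    using auxiliary_parameter_rec[OF assms] by algebra
  moreover have "\<rho> (j - 1) \<noteq> 0"
    using tight_pair_nonzero[OF tight, of "j - 1"] \<sigma>_feasible_neq[of "j - 1"] assms by simp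
  moreover have "\<sigma> (j - 1) \<noteq> 0"
  proof
    assume "\<sigma> (j - 1) = 0"
    moreover from this have "\<sigma> (Suc (j - 1)) = 0"
      using \<sigma>_j assms by simp
    moreover have "j - 1 < D"
      using assms by linarith
    ultimately show False
      using pseudo_cosine_no_consecutive_zeros[OF pseudo_cosine_\<sigma>] by blast
  qed
  ultimately show False
    using \<epsilon>_neq_1 \<epsilon>_neq_minus_1 by simp
qed

lemma \<rho>_eq_prod:
  assumes "i \<le> D"
  shows "\<rho> i = (\<Prod>j=1..i. (\<sigma> (j - 1) - \<epsilon> * \<sigma> j) / (\<sigma> j - \<epsilon> * \<sigma> (j - 1)))"
  using assms
  by (intro recurrence_eq_prod[where f = \<rho>, OF \<rho>_0] auxiliary_parameter_rec denominator_nonzero) auto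

end

theorem lemma15p3:
  fixes V :: "'v set" and E :: "'v \<Rightarrow> 'v \<Rightarrow> bool" and D :: nat
    and a b c :: "nat \<Rightarrow> nat" and \<sigma> \<rho> :: "nat \<Rightarrow> real" and \<epsilon> :: real
  assumes "distance_regular V E D a b c"
    and "D \<ge> 3"
    and "a 1 \<noteq> 0"
    and "feasible_pc D a b c \<sigma>"
    and "nontrivial_pc D a b c \<rho>"
    and "tight_pair D a b c \<sigma> \<rho>"
    and "auxiliary_parameter D \<sigma> \<rho> \<epsilon>"
  shows "(\<forall>j\<in>{1..D}. \<sigma> j - \<epsilon> * \<sigma> (j - 1) \<noteq> 0) \<and>
         (\<forall>i\<le>D. \<rho> i = (\<Prod>j=1..i. (\<sigma> (j - 1) - \<epsilon> * \<sigma> j) / (\<sigma> j - \<epsilon> * \<sigma> (j - 1))))"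
proof -
  interpret intersection_numbers D a b c
    using assms(1) by (rule distance_regular_intersection_numbers)
  interpret feasible_tight_pair D a b c \<sigma> \<rho> \<epsilon>
    using assms(2-7) by unfold_locales
  show ?thesis
    using denominator_nonzero \<rho>_eq_prod by auto
qed

end
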